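(* Let $\mathcal{L}$ be a nonempty set and $\mathcal{C}: 2^{\mathcal{L}}\to 2^{\mathcal{L}}$ a C-logics. A set $A\subseteq\mathcal{L}$ is inconsistent iff $\mathrm{Cn}(A)=\mathcal{L}$.
   Context: A C-logics is a map $\mathcal{C}: 2^{\mathcal{L}}\to 2^{\mathcal{L}}$ satisfying Inclusion ($A\subseteq\mathcal{C}(A)$) and Cumulativity ($A\subseteq B\subseteq\mathcal{C}(A)\Rightarrow\mathcal{C}(A)=\mathcal{C}(B)$) for all $A,B\subseteq\mathcal{L}$. $A$ is inconsistent iff $\mathcal{C}(A)=\mathcal{L}$. A theory is a set $T\subseteq\mathcal{L}$ with $\mathcal{C}(T)=T$. $\mathrm{Cn}(A)=\bigcap\{T : T\supseteq A,\ T \text{ a theory}\}$. *)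

theory Defs
  imports Main
begin

definition C_logics :: "'a set \<Rightarrow> ('a set \<Rightarrow> 'a set) \<Rightarrow> bool" where
  "C_logics L C \<longleftrightarrow>
     (\<forall>A. A \<subseteq> L \<longrightarrow> C A \<subseteq> L) \<and>
     (\<forall>A. A \<subseteq> L \<longrightarrow> A \<subseteq> C A) \<and>
     (\<forall>A B. A \<subseteq> L \<longrightarrow> B \<subseteq> L \<longrightarrow> A \<subseteq> B \<longrightarrow> B \<subseteq> C A \<longrightarrow> C A = C B)"

definition inconsistent :: "'a set \<Rightarrow> ('a set \<Rightarrow> 'a set) \<Rightarrow> 'a set \<Rightarrow> bool" where
  "inconsistent L C A \<longleftrightarrow> C A = L"

definition is_theory :: "'a set \<Rightarrow> ('a set \<Rightarrow> 'a set) \<Rightarrow> 'a set \<Rightarrow> bool" where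
  "is_theory L C T \<longleftrightarrow> T \<subseteq> L \<and> C T = T"

definition Cn :: "'a set \<Rightarrow> ('a set \<Rightarrow> 'a set) \<Rightarrow> 'a set \<Rightarrow> 'a set" where
  "Cn L C A = \<Inter>{T. A \<subseteq> T \<and> is_theory L C T}"

end

theory Submission
  imports Defs
begin

text \<open>By Cumulativity \<open>C A\<close> is a theory, so \<open>Cn A \<subseteq> C A\<close>; this gives one direction.
  Conversely, if \<open>C A = L\<close> then every theory \<open>T \<supseteq> A\<close> lies between \<open>A\<close> and \<open>C A\<close>,
  so Cumulativity yields \<open>T = C T = C A = L\<close>; hence \<open>L\<close> is the only theory containing \<open>A\<close>.\<close>

lemma C_logics_subset:
  assumes "C_logics L C" and "A \<subseteq> L"
  shows "C A \<subseteq> L"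
  using assms unfolding C_logics_def by (elim conjE) (erule allE, erule mp)

lemma C_logics_inclusion:
  assumes "C_logics L C" and "A \<subseteq> L"
  shows "A \<subseteq> C A"
  using assms unfolding C_logics_def by (elim conjE) (erule allE, erule mp)

lemma C_logics_cumulativity:
  assumes "C_logics L C" and "B \<subseteq> L" and "A \<subseteq> B" and "B \<subseteq> C A"
  shows "C A = C B"
proof -
  from assms(3,2) have "A \<subseteq> L"
    by (rule order_trans)
  with assms show ?thesis
    unfolding C_logics_def by (metis (no_types))
qed

lemma C_logics_idem:
  assumes "C_logics L C" and "A \<subseteq> L"
  shows "C (C A) = C A"
proof -
  have "C A = C (C A)"
    using C_logics_subset[OF assms] C_logics_inclusion[OF assms] order_refl
    by (rule C_logics_cumulativity[OF assms(1)])
  then show ?thesis ..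
qed

lemma is_theory_C:
  assumes "C_logics L C" and "A \<subseteq> L"
  shows "is_theory L C (C A)"
  using assms by (simp add: is_theory_def C_logics_subset C_logics_idem)

lemma Cn_subset_C:
  assumes "C_logics L C" and "A \<subseteq> L"
  shows "Cn L C A \<subseteq> C A"
proof -
  have "C A \<in> {T. A \<subseteq> T \<and> is_theory L C T}"
    using C_logics_inclusion[OF assms] is_theory_C[OF assms] by simp
  then show ?thesis
    unfolding Cn_def by (rule Inter_lower)
qed

lemma theory_eq_C_if_between:
  assumes "C_logics L C" and "is_theory L C T" and "A \<subseteq> T" and "T \<subseteq> C A"
  shows "T = C A"
proof -
  have "C A = C T"
    using assms by (intro C_logics_cumulativity[OF assms(1)]) (auto simp: is_theory_def)
  with \<open>is_theory L C T\<close> show ?thesis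
    by (simp add: is_theory_def)
qed

lemma Cn_eq_L_if_C_eq_L:
  assumes "C_logics L C" and "A \<subseteq> L" and "C A = L"
  shows "Cn L C A = L"
proof -
  have "{T. A \<subseteq> T \<and> is_theory L C T} = {L}"
  proof (intro equalityI subsetI)
    fix T
    assume "T \<in> {T. A \<subseteq> T \<and> is_theory L C T}"
    then have "is_theory L C T" and "A \<subseteq> T" by auto
    moreover from \<open>is_theory L C T\<close> \<open>C A = L\<close> have "T \<subseteq> C A"
      by (simp add: is_theory_def)
    ultimately have "T = C A"
      by (rule theory_eq_C_if_between[OF assms(1)])
    with \<open>C A = L\<close> show "T \<in> {L}"
      by simp
  next
    fix T
    assume "T \<in> {L}"
    then show "T \<in> {T. A \<subseteq> T \<and> is_theory L C T}"
      using assms is_theory_C[OF assms(1,2)] C_logics_inclusion[OF assms(1,2)] by simp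
  qed
  then show ?thesis
    by (simp add: Cn_def)
qed

theorem lemma9:
  fixes L :: "'a set" and C :: "'a set \<Rightarrow> 'a set" and A :: "'a set"
  assumes "L \<noteq> {}" and "C_logics L C" and "A \<subseteq> L"
  shows "inconsistent L C A \<longleftrightarrow> Cn L C A = L"
proof
  assume "inconsistent L C A"
  then show "Cn L C A = L"
    using Cn_eq_L_if_C_eq_L[OF assms(2,3)] by (simp add: inconsistent_def)
next
  assume "Cn L C A = L"
  then show "inconsistent L C A"
    using Cn_subset_C[OF assms(2,3)] C_logics_subset[OF assms(2,3)]
    by (simp add: inconsistent_def)
qed

end
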